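(* Let $\bm\theta = (\theta^1,\dots,\theta^k) \in (0,1)^k$ with a unique best treatment $d^* = \arg\max_d \theta^d$. Then \[ \Gamma^*(\bm\theta) \ge \frac{1}{4 H(\bm\theta)}, \qquad \text{where } H(\bm\theta) = \sum_{d \ne d^*} \frac{1}{(\theta^{d^*} - \theta^d)^2}. \]
   Context: Let $d_{\mathrm{KL}}(p,q) = p\log(p/q) + (1-p)\log((1-p)/(1-q))$ be the KL divergence between Bernoulli distributions with means $p$ and $q$. For allocation shares $\bm\rho = (\rho^1,\dots,\rho^k)$ and $j \neq d^*$ define $G_j(\rho^{d^*},\rho^j) = \min_{x \in [\theta^j, \theta^{d^*}]} \rho^{d^*} d_{\mathrm{KL}}(x,\theta^{d^*}) + \rho^j d_{\mathrm{KL}}(x,\theta^j)$. Then $\Gamma^*(\bm\theta)$ is the optimal value of the problem: maximize $\Gamma$ over $\Gamma$ and $\bm\rho$ subject to $G_j(\rho^{d^*},\rho^j) - \Gamma \ge 0$ for all $j \ne d^*$, $\sum_{i=1}^k \rho^i = 1$, $\rho^{d^*} = 1/2$, and $\rho^j \ge 0$ for all $j$. *)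

theory Defs
  imports "HOL-Analysis.Analysis"
begin

definition dKL :: "real \<Rightarrow> real \<Rightarrow> real" where
  "dKL p q = p * ln (p / q) + (1 - p) * ln ((1 - p) / (1 - q))"

definition G :: "(nat \<Rightarrow> real) \<Rightarrow> nat \<Rightarrow> (nat \<Rightarrow> real) \<Rightarrow> nat \<Rightarrow> real" where
  "G \<theta> dstar \<rho> j =
     (INF x\<in>{\<theta> j..\<theta> dstar}. \<rho> dstar * dKL x (\<theta> dstar) + \<rho> j * dKL x (\<theta> j))"

definition Gamma_star :: "nat \<Rightarrow> (nat \<Rightarrow> real) \<Rightarrow> nat \<Rightarrow> real" where
  "Gamma_star k \<theta> dstar = Sup {\<Gamma>. \<exists>\<rho>.
      (\<forall>j\<in>{1..k}. j \<noteq> dstar \<longrightarrow> G \<theta> dstar \<rho> j - \<Gamma> \<ge> 0)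
    \<and> (\<Sum>i=1..k. \<rho> i) = 1
    \<and> \<rho> dstar = 1/2
    \<and> (\<forall>j\<in>{1..k}. \<rho> j \<ge> 0)}"

definition H :: "nat \<Rightarrow> (nat \<Rightarrow> real) \<Rightarrow> nat \<Rightarrow> real" where
  "H k \<theta> dstar = (\<Sum>d\<in>{1..k} - {dstar}. 1 / (\<theta> dstar - \<theta> d)^2)"

end

theory Submission
  imports Defs
begin

text \<open>Give the best arm weight 1/2 and every suboptimal arm j a weight proportional to
  1 / \<Delta>j^2, where \<Delta>j = \<theta>(d*) - \<theta>(j). By Pinsker's inequality dKL(p, q) \<ge> 2 (p - q)^2,
  the function minimised in G j dominates a quadratic in x whose minimum over
  [\<theta>(j), \<theta>(d*)] is at least \<rho>(j) \<Delta>j^2, as long as \<rho>(j) \<le> \<rho>(d*). For the chosen weights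
  this equals 1 / (2 H) for every j, so the allocation is feasible with value 1 / (2 H),
  twice the claimed bound.\<close>

lemma dKL_ge_two_sq_diff:
  fixes p q :: real
  assumes p: "0 < p" "p < 1" and q: "0 < q" "q < 1"
  shows "2 * (p - q)^2 \<le> dKL p q"
proof -
  define h where "h t = - p * ln t - (1 - p) * ln (1 - t) - 2 * (p - t)^2" for t :: real
  define h' where "h' t = (t - p) * (1 / (t * (1 - t)) - 4)" for t :: real
  have h_deriv: "DERIV h t :> h' t" if "0 < t" "t < 1" for t :: real
  proof -
    have "DERIV h t :> - p / t + (1 - p) / (1 - t) + 4 * (p - t)"
      unfolding h_def using that by (auto intro!: derivative_eq_intros)
    also have "- p / t + (1 - p) / (1 - t) + 4 * (p - t) = h' t"
      unfolding h'_def using that by (simp add: field_simps)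
    finally show ?thesis .
  qed
  have h'_factor: "4 \<le> 1 / (t * (1 - t))" if "0 < t" "t < 1" for t :: real
  proof -
    have "t * (1 - t) \<le> 1/4"
      using zero_le_power2[of "t - 1/2"] by (simp add: power2_eq_square algebra_simps)
    then show ?thesis using that by (simp add: le_divide_eq)
  qed
  have "h p \<le> h q"
  proof (cases "p \<le> q")
    case True
    show ?thesis
    proof (rule DERIV_nonneg_imp_nondecreasing[OF True])
      fix t assume "p \<le> t" "t \<le> q"
      then show "\<exists>y. DERIV h t :> y \<and> 0 \<le> y"
        using h_deriv[of t] h'_factor[of t] p q unfolding h'_def by auto
    qed
  next
    case False
    show ?thesis
    proof (rule DERIV_nonpos_imp_nonincreasing[of q p])
      fix t assume "q \<le> t" "t \<le> p"
      then show "\<exists>y. DERIV h t :> y \<and> y \<le> 0"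
        using h_deriv[of t] h'_factor[of t] p q unfolding h'_def
        by (auto simp: mult_nonpos_nonneg)
    qed (use False in simp)
  qed
  moreover have "dKL p q - 2 * (p - q)^2 = h q - h p"
    unfolding dKL_def h_def using p q by (simp add: ln_div algebra_simps)
  ultimately show ?thesis by simp
qed

corollary dKL_nonneg:
  fixes p q :: real
  assumes "0 < p" "p < 1" "0 < q" "q < 1"
  shows "0 \<le> dKL p q"
  using dKL_ge_two_sq_diff[OF assms] zero_le_power2[of "p - q"] by linarith

lemma dKL_self [simp]: "dKL p p = 0"
  unfolding dKL_def by simp

lemma G_ge_weight_times_sq_gap:
  assumes "0 < \<theta> j" "\<theta> j < \<theta> dstar" "\<theta> dstar < 1"
    and "0 \<le> \<rho> j" "\<rho> j \<le> \<rho> dstar"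
  shows "\<rho> j * (\<theta> dstar - \<theta> j)^2 \<le> G \<theta> dstar \<rho> j"
  unfolding G_def
proof (rule cINF_greatest)
  show "{\<theta> j..\<theta> dstar} \<noteq> {}" using assms by simp
  fix x assume x: "x \<in> {\<theta> j..\<theta> dstar}"
  have x01: "0 < x" "x < 1" using x assms by auto
  have "(\<theta> dstar - \<theta> j)^2 \<le> 2 * ((x - \<theta> dstar)^2 + (x - \<theta> j)^2)"
    using zero_le_power2[of "2 * x - \<theta> dstar - \<theta> j"]
    by (simp add: power2_eq_square algebra_simps)
  then have "\<rho> j * (\<theta> dstar - \<theta> j)^2
      \<le> \<rho> j * (2 * (x - \<theta> dstar)^2) + \<rho> j * (2 * (x - \<theta> j)^2)"
    using \<open>0 \<le> \<rho> j\<close> by (metis distrib_left mult_left_mono mult_2)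
  also have "\<dots> \<le> \<rho> dstar * (2 * (x - \<theta> dstar)^2) + \<rho> j * (2 * (x - \<theta> j)^2)"
    using \<open>\<rho> j \<le> \<rho> dstar\<close> by (simp add: mult_right_mono)
  also have "\<dots> \<le> \<rho> dstar * dKL x (\<theta> dstar) + \<rho> j * dKL x (\<theta> j)"
    using assms x01 by (intro add_mono mult_left_mono dKL_ge_two_sq_diff) auto
  finally show "\<rho> j * (\<theta> dstar - \<theta> j)^2
      \<le> \<rho> dstar * dKL x (\<theta> dstar) + \<rho> j * dKL x (\<theta> j)" .
qed

lemma G_le_dKL_at_endpoint:
  assumes "0 < \<theta> j" "\<theta> j \<le> \<theta> dstar" "\<theta> dstar < 1"
    and "0 \<le> \<rho> dstar" "0 \<le> \<rho> j"
  shows "G \<theta> dstar \<rho> j \<le> \<rho> dstar * dKL (\<theta> j) (\<theta> dstar)"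
proof -
  have "bdd_below ((\<lambda>x. \<rho> dstar * dKL x (\<theta> dstar) + \<rho> j * dKL x (\<theta> j)) ` {\<theta> j..\<theta> dstar})"
    using assms
    by (intro bdd_belowI[of _ 0]) (auto intro!: add_nonneg_nonneg mult_nonneg_nonneg dKL_nonneg)
  then have "G \<theta> dstar \<rho> j \<le> \<rho> dstar * dKL (\<theta> j) (\<theta> dstar) + \<rho> j * dKL (\<theta> j) (\<theta> j)"
    unfolding G_def by (rule cINF_lower) (use assms in auto)
  then show ?thesis by simp
qed

definition feasible :: "nat \<Rightarrow> (nat \<Rightarrow> real) \<Rightarrow> nat \<Rightarrow> (nat \<Rightarrow> real) \<Rightarrow> real \<Rightarrow> bool" where
  "feasible k \<theta> dstar \<rho> \<Gamma> \<longleftrightarrow>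
     (\<forall>j\<in>{1..k}. j \<noteq> dstar \<longrightarrow> G \<theta> dstar \<rho> j - \<Gamma> \<ge> 0)
   \<and> (\<Sum>i=1..k. \<rho> i) = 1 \<and> \<rho> dstar = 1/2 \<and> (\<forall>j\<in>{1..k}. \<rho> j \<ge> 0)"

lemma Gamma_star_altdef: "Gamma_star k \<theta> dstar = Sup {\<Gamma>. \<exists>\<rho>. feasible k \<theta> dstar \<rho> \<Gamma>}"
  unfolding Gamma_star_def feasible_def ..

lemma feasible_le_half_dKL:
  assumes "feasible k \<theta> dstar \<rho> \<Gamma>" "j \<in> {1..k}" "j \<noteq> dstar"
    and "0 < \<theta> j" "\<theta> j \<le> \<theta> dstar" "\<theta> dstar < 1"
  shows "\<Gamma> \<le> dKL (\<theta> j) (\<theta> dstar) / 2"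
proof -
  have "\<Gamma> \<le> G \<theta> dstar \<rho> j" "\<rho> dstar = 1/2" "0 \<le> \<rho> j"
    using assms(1-3) unfolding feasible_def by auto
  with G_le_dKL_at_endpoint[of \<theta> j dstar \<rho>] assms(4-6) show ?thesis by simp
qed

lemma feasible_le_Gamma_star:
  assumes "feasible k \<theta> dstar \<rho> \<Gamma>" "j \<in> {1..k}" "j \<noteq> dstar"
    and "0 < \<theta> j" "\<theta> j \<le> \<theta> dstar" "\<theta> dstar < 1"
  shows "\<Gamma> \<le> Gamma_star k \<theta> dstar"
  unfolding Gamma_star_altdef
proof (rule cSup_upper)
  show "\<Gamma> \<in> {\<Gamma>. \<exists>\<rho>. feasible k \<theta> dstar \<rho> \<Gamma>}" using assms(1) by blast
  show "bdd_above {\<Gamma>. \<exists>\<rho>. feasible k \<theta> dstar \<rho> \<Gamma>}"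
    using feasible_le_half_dKL[OF _ assms(2-6)] by (intro bdd_aboveI) blast
qed

lemma inverse_sq_gap_le_H:
  assumes "j \<in> {1..k} - {dstar}"
  shows "1 / (\<theta> dstar - \<theta> j)^2 \<le> H k \<theta> dstar"
  unfolding H_def by (rule member_le_sum[OF assms]) auto

lemma H_pos:
  assumes "j \<in> {1..k}" "j \<noteq> dstar" "\<theta> j \<noteq> \<theta> dstar"
  shows "0 < H k \<theta> dstar"
proof -
  have "0 < 1 / (\<theta> dstar - \<theta> j)^2" using assms(3) by simp
  also have "\<dots> \<le> H k \<theta> dstar" using assms(1,2) by (intro inverse_sq_gap_le_H) simp
  finally show ?thesis .
qed

definition gap_allocation :: "nat \<Rightarrow> (nat \<Rightarrow> real) \<Rightarrow> nat \<Rightarrow> nat \<Rightarrow> real" where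
  "gap_allocation k \<theta> dstar i =
     (if i = dstar then 1/2
      else if i \<in> {1..k} then 1 / (2 * H k \<theta> dstar * (\<theta> dstar - \<theta> i)^2) else 0)"

lemma sum_gap_allocation:
  assumes "dstar \<in> {1..k}" "0 < H k \<theta> dstar"
  shows "(\<Sum>i=1..k. gap_allocation k \<theta> dstar i) = 1"
proof -
  let ?W = "H k \<theta> dstar"
  have "(\<Sum>i=1..k. gap_allocation k \<theta> dstar i)
      = 1/2 + (\<Sum>i\<in>{1..k} - {dstar}. gap_allocation k \<theta> dstar i)"
    using assms(1) by (simp add: sum.remove gap_allocation_def)
  also have "(\<Sum>i\<in>{1..k} - {dstar}. gap_allocation k \<theta> dstar i)
      = (\<Sum>i\<in>{1..k} - {dstar}. 1 / (2 * ?W) * (1 / (\<theta> dstar - \<theta> i)^2))"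
    by (rule sum.cong) (auto simp: gap_allocation_def)
  also have "\<dots> = 1 / (2 * ?W) * ?W"
    unfolding H_def by (simp add: sum_distrib_left)
  finally show ?thesis using assms(2) by simp
qed

lemma gap_allocation_feasible:
  assumes "dstar \<in> {1..k}" "0 < H k \<theta> dstar"
    and "\<forall>d\<in>{1..k}. 0 < \<theta> d \<and> \<theta> d < 1"
    and "\<forall>d\<in>{1..k}. d \<noteq> dstar \<longrightarrow> \<theta> d < \<theta> dstar"
  shows "feasible k \<theta> dstar (gap_allocation k \<theta> dstar) (1 / (2 * H k \<theta> dstar))"
proof -
  let ?W = "H k \<theta> dstar" and ?\<rho> = "gap_allocation k \<theta> dstar"
  have "1 / (2 * ?W) \<le> G \<theta> dstar ?\<rho> j" if j: "j \<in> {1..k}" "j \<noteq> dstar" for j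
  proof -
    define \<Delta> where "\<Delta> = \<theta> dstar - \<theta> j"
    have "0 < \<Delta>" using assms(4) j unfolding \<Delta>_def by auto
    have \<rho>j: "?\<rho> j = 1 / (2 * ?W * \<Delta>^2)"
      using j unfolding gap_allocation_def \<Delta>_def by simp
    have "1 \<le> ?W * \<Delta>^2"
      using inverse_sq_gap_le_H[of j k dstar \<theta>] j \<open>0 < \<Delta>\<close>
      unfolding \<Delta>_def[symmetric] by (simp add: divide_le_eq)
    then have "?\<rho> j \<le> 1 / (2 * 1)"
      unfolding \<rho>j mult.assoc using assms(2) \<open>0 < \<Delta>\<close>
      by (intro divide_left_mono mult_left_mono) auto
    then have "?\<rho> j \<le> ?\<rho> dstar" by (simp add: gap_allocation_def)
    moreover have "?\<rho> j * \<Delta>^2 = 1 / (2 * ?W)"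
      using assms(2) \<open>0 < \<Delta>\<close> by (simp add: \<rho>j)
    ultimately show ?thesis
      using G_ge_weight_times_sq_gap[of \<theta> j dstar ?\<rho>] assms(1-3) j \<open>0 < \<Delta>\<close>
      unfolding \<Delta>_def by (auto simp: \<rho>j)
  qed
  moreover have "\<forall>j\<in>{1..k}. 0 \<le> ?\<rho> j"
    using assms(2) by (simp add: gap_allocation_def)
  ultimately show ?thesis
    using sum_gap_allocation[OF assms(1,2)] unfolding feasible_def
    by (simp add: gap_allocation_def)
qed

lemma exists_other_arm:
  fixes k dstar :: nat
  assumes "2 \<le> k" "dstar \<in> {1..k}"
  obtains j where "j \<in> {1..k}" "j \<noteq> dstar"
proof
  show "(if dstar = 1 then 2 else 1) \<in> {1..k}" using assms by auto
qed auto

theorem Gamma_star_ge_inverse_two_H: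
  assumes "k \<ge> 2"
    and "\<forall>d\<in>{1..k}. 0 < \<theta> d \<and> \<theta> d < 1"
    and "dstar \<in> {1..k}"
    and "\<forall>d\<in>{1..k}. d \<noteq> dstar \<longrightarrow> \<theta> d < \<theta> dstar"
  shows "1 / (2 * H k \<theta> dstar) \<le> Gamma_star k \<theta> dstar"
proof -
  obtain j where j: "j \<in> {1..k}" "j \<noteq> dstar" using exists_other_arm assms(1,3) .
  with assms have H: "0 < H k \<theta> dstar" by (intro H_pos) auto
  show ?thesis
    using feasible_le_Gamma_star[OF gap_allocation_feasible[OF assms(3) H assms(2,4)] j]
      assms(2-4) j by auto
qed

theorem lemma1:
  fixes k :: nat and \<theta> :: "nat \<Rightarrow> real" and dstar :: nat
  assumes "k \<ge> 2"
    and "\<forall>d\<in>{1..k}. 0 < \<theta> d \<and> \<theta> d < 1"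
    and "dstar \<in> {1..k}"
    and "\<forall>d\<in>{1..k}. d \<noteq> dstar \<longrightarrow> \<theta> d < \<theta> dstar"
  shows "Gamma_star k \<theta> dstar \<ge> 1 / (4 * H k \<theta> dstar)"
proof -
  obtain j where "j \<in> {1..k}" "j \<noteq> dstar" using exists_other_arm assms(1,3) .
  with assms have "0 < H k \<theta> dstar" by (intro H_pos) auto
  then have "1 / (4 * H k \<theta> dstar) \<le> 1 / (2 * H k \<theta> dstar)"
    by (intro divide_left_mono) auto
  also have "\<dots> \<le> Gamma_star k \<theta> dstar"
    using Gamma_star_ge_inverse_two_H[OF assms] .
  finally show ?thesis .
qed

end
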